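(* Consider a normal extremal (with $M=1$) starting at the identity, with covector data $\varphi_i=\psi_i(0)$, $i=1,\dots,4$. Then for all $t\in\mathbb R$: (i) $\psi_4\equiv\varphi_4$, $\psi_3=\varphi_3+\tfrac12\varphi_4x$, $\psi_2=\varphi_2+\tfrac12\varphi_3x+\tfrac16\varphi_4x^2$, $\psi_1=\varphi_1-\tfrac12\varphi_3y-\tfrac16\varphi_4(xy+3z)$, and hence $h_1=\varphi_1-(\varphi_3+\tfrac12\varphi_4x)y-\varphi_4z$, $h_2=\varphi_2+(\varphi_3+\tfrac12\varphi_4x)x$; (ii) a.e. $\dot h_1=-(\varphi_3+\varphi_4x)u_2$, $\dot h_2=(\varphi_3+\varphi_4x)u_1$, and the quantity $\tfrac12(\varphi_3+\varphi_4x(t))^2-\varphi_4h_2(t)$ is constant, equal to $\tfrac12\varphi_3^2-\varphi_2\varphi_4$; (iii) $\varphi_1x(t)+\varphi_2y(t)+\bigl(2\varphi_3+\tfrac12\varphi_4x(t)\bigr)z(t)+3\varphi_4v(t)=t$; (iv) with $\theta(t)$ the angle function, $\theta$ is continuously differentiable and $\varphi_3+\varphi_4x(t)=r^2(\theta(t))\dot\theta(t)$, so $\dot\theta^2=\dfrac{\varphi_3^2+2\varphi_4(r(\theta)\sin\theta-\varphi_2)}{r^4(\theta)}$.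
   Context: Let $\mathfrak g$ be the Engel algebra with basis $X,Y,Z,V$, $[X,Y]=Z$, $[X,Z]=V$, all other brackets of basis elements zero; $G$ the corresponding connected simply connected Lie group, with coordinates of the first kind $(x,y,z,v)$ ($\exp(xX+yY+zZ+vV)\leftrightarrow(x,y,z,v)$, identity $=0$). Let $F$ be an arbitrary norm on $\mathbb R^2$, $U=\{u\in\mathbb R^2:F(u)\le1\}$, where $(u_1,u_2)$ is identified with $u_1X(e)+u_2Y(e)$. The left-invariant time-optimal control system is $\dot x=u_1,\ \dot y=u_2,\ \dot z=\tfrac12(xu_2-yu_1),\ \dot v=-\tfrac12(z+\tfrac16xy)u_1+\tfrac1{12}x^2u_2$, with measurable control $u(t)\in U$ and $x(0)=y(0)=z(0)=v(0)=0$. An extremal is a trajectory $(x,y,z,v)(t)$, $t\in\mathbb R$, with control $u(t)$, for which there is a nowhere vanishing absolutely continuous $\psi(t)=(\psi_1,\psi_2,\psi_3,\psi_4)(t)$ satisfying a.e. $\dot\psi_1=\tfrac1{12}\psi_4yu_1-(\tfrac12\psi_3+\tfrac16\psi_4x)u_2$, $\dot\psi_2=(\tfrac12\psi_3+\tfrac1{12}\psi_4x)u_1$, $\dot\psi_3=\tfrac12\psi_4u_1$, $\dot\psi_4=0$, and the maximum condition $h_1(t)u_1(t)+h_2(t)u_2(t)=\max_{u\in U}(h_1(t)u_1+h_2(t)u_2)=M$ for a.e. $t$, where $h_1=\psi_1-\tfrac12\psi_3y-\tfrac1{12}\psi_4xy-\tfrac12\psi_4z$, $h_2=\psi_2+\tfrac12\psi_3x+\tfrac1{12}\psi_4x^2$,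 and $M\ge0$ is a constant. It is abnormal if $M=0$ and normal if $M>0$; in the normal case $\psi$ is rescaled so that $M=1$. Write $\varphi_i=\psi_i(0)$. Let $F_U(h)=\max_{u\in U}h\cdot u$ and $U^*=\{h:F_U(h)\le1\}$ (polar figure). Let $r(\theta)>0$ be the polar equation of $\partial U^*$, i.e. $F_U(r(\theta)\cos\theta,r(\theta)\sin\theta)=1$. For $M=1$, $(h_1(t),h_2(t))\in\partial U^*$, and $\theta(t)$ denotes a continuous function with $(h_1(t),h_2(t))=r(\theta(t))(\cos\theta(t),\sin\theta(t))$. *)

theory Defs
  imports "HOL-Analysis.Analysis"
begin

definition is_norm2 :: "(real \<times> real \<Rightarrow> real) \<Rightarrow> bool" where
  "is_norm2 F \<longleftrightarrow>
     (\<forall>a b. F (a, b) \<ge> 0) \<and>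
     (\<forall>a b. F (a, b) = 0 \<longleftrightarrow> a = 0 \<and> b = 0) \<and>
     (\<forall>c a b. F (c * a, c * b) = \<bar>c\<bar> * F (a, b)) \<and>
     (\<forall>a b c d. F (a + c, b + d) \<le> F (a, b) + F (c, d))"

definition ballU :: "(real \<times> real \<Rightarrow> real) \<Rightarrow> (real \<times> real) set" where
  "ballU F = {u. F u \<le> 1}"

definition F_U :: "(real \<times> real \<Rightarrow> real) \<Rightarrow> real \<times> real \<Rightarrow> real" where
  "F_U F h = Sup {fst h * fst u + snd h * snd u | u. u \<in> ballU F}"

definition polarU :: "(real \<times> real \<Rightarrow> real) \<Rightarrow> (real \<times> real) set" where
  "polarU F = {h. F_U F h \<le> 1}"

definition polar_r :: "(real \<times> real \<Rightarrow> real) \<Rightarrow> real \<Rightarrow> real" where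
  "polar_r F \<theta> = (THE \<rho>. \<rho> > 0 \<and> F_U F (\<rho> * cos \<theta>, \<rho> * sin \<theta>) = 1)"

definition ham1 :: "real \<Rightarrow> real \<Rightarrow> real \<Rightarrow> real \<Rightarrow> real \<Rightarrow> real \<Rightarrow> real" where
  "ham1 p1 p3 p4 x y z = p1 - p3 * y / 2 - p4 * x * y / 12 - p4 * z / 2"

definition ham2 :: "real \<Rightarrow> real \<Rightarrow> real \<Rightarrow> real \<Rightarrow> real" where
  "ham2 p2 p3 p4 x = p2 + p3 * x / 2 + p4 * x^2 / 12"

(* Absolutely continuous functions satisfying an ODE a.e. are
   expressed equivalently by the integral equations (Lebesgue interval integrals from 0 to t,
   oriented, so t < 0 is allowed). *)
definition normal_extremal ::
  "(real \<times> real \<Rightarrow> real) \<Rightarrow> (real \<Rightarrow> real) \<Rightarrow> (real \<Rightarrow> real) \<Rightarrow> (real \<Rightarrow> real) \<Rightarrow> (real \<Rightarrow> real)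
   \<Rightarrow> (real \<Rightarrow> real) \<Rightarrow> (real \<Rightarrow> real)
   \<Rightarrow> (real \<Rightarrow> real) \<Rightarrow> (real \<Rightarrow> real) \<Rightarrow> (real \<Rightarrow> real) \<Rightarrow> (real \<Rightarrow> real) \<Rightarrow> bool" where
  "normal_extremal F x y z v u1 u2 \<psi>1 \<psi>2 \<psi>3 \<psi>4 \<longleftrightarrow>
     u1 \<in> borel_measurable lborel \<and> u2 \<in> borel_measurable lborel \<and>
     (\<forall>t. (u1 t, u2 t) \<in> ballU F) \<and>
     (\<forall>t. x t = (LBINT s=0..ereal t. u1 s)) \<and>
     (\<forall>t. y t = (LBINT s=0..ereal t. u2 s)) \<and>
     (\<forall>t. z t = (LBINT s=0..ereal t. (x s * u2 s - y s * u1 s) / 2)) \<and>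
     (\<forall>t. v t = (LBINT s=0..ereal t. - (z s + x s * y s / 6) * u1 s / 2 + x s ^ 2 * u2 s / 12)) \<and>
     (\<forall>t. \<psi>1 t = \<psi>1 0 + (LBINT s=0..ereal t.
            \<psi>4 s * y s * u1 s / 12 - (\<psi>3 s / 2 + \<psi>4 s * x s / 6) * u2 s)) \<and>
     (\<forall>t. \<psi>2 t = \<psi>2 0 + (LBINT s=0..ereal t. (\<psi>3 s / 2 + \<psi>4 s * x s / 12) * u1 s)) \<and>
     (\<forall>t. \<psi>3 t = \<psi>3 0 + (LBINT s=0..ereal t. \<psi>4 s * u1 s / 2)) \<and>
     (\<forall>t. \<psi>4 t = \<psi>4 0) \<and>
     (\<forall>t. (\<psi>1 t, \<psi>2 t, \<psi>3 t, \<psi>4 t) \<noteq> (0, 0, 0, 0)) \<and>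
     (AE t in lborel.
        ham1 (\<psi>1 t) (\<psi>3 t) (\<psi>4 t) (x t) (y t) (z t) * u1 t
          + ham2 (\<psi>2 t) (\<psi>3 t) (\<psi>4 t) (x t) * u2 t
        = F_U F (ham1 (\<psi>1 t) (\<psi>3 t) (\<psi>4 t) (x t) (y t) (z t), ham2 (\<psi>2 t) (\<psi>3 t) (\<psi>4 t) (x t))
      \<and> F_U F (ham1 (\<psi>1 t) (\<psi>3 t) (\<psi>4 t) (x t) (y t) (z t), ham2 (\<psi>2 t) (\<psi>3 t) (\<psi>4 t) (x t)) = 1)"

end

theory Submission
  imports Defs
begin

text \<open>Along a normal extremal the state and the covector are indefinite integrals of locally
  bounded functions, hence locally Lipschitz and differentiable almost everywhere. A locally
  Lipschitz function whose derivative vanishes almost everywhere is constant, because it maps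
  every interval onto a connected null set. Integrating the costate equations against
  \<open>dx = u\<^sub>1 dt\<close> this way yields the explicit covector, hence \<open>h\<^sub>1, h\<^sub>2\<close> as polynomials in
  \<open>x, y, z\<close> with \<open>h\<^sub>1' = -(\<phi>\<^sub>3 + \<phi>\<^sub>4 x) u\<^sub>2\<close> and \<open>h\<^sub>2' = (\<phi>\<^sub>3 + \<phi>\<^sub>4 x) u\<^sub>1\<close>; the first integral is then
  an algebraic identity, and the time identity holds because its left-hand side has a.e.
  derivative \<open>h\<^sub>1 u\<^sub>1 + h\<^sub>2 u\<^sub>2 = 1\<close>. Finally \<open>(h\<^sub>1, h\<^sub>2)\<close> never vanishes and its angular velocity
  \<open>(h\<^sub>1 h\<^sub>2' - h\<^sub>2 h\<^sub>1') / (h\<^sub>1\<^sup>2 + h\<^sub>2\<^sup>2) = (\<phi>\<^sub>3 + \<phi>\<^sub>4 x) / r\<^sup>2\<close> is continuous, so every continuous polar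
  angle \<open>\<theta>\<close> is continuously differentiable with \<open>r\<^sup>2 \<theta>' = \<phi>\<^sub>3 + \<phi>\<^sub>4 x\<close>.\<close>

section \<open>Lipschitz functions on compact sets\<close>

definition locally_lipschitz :: "(real \<Rightarrow> real) \<Rightarrow> bool" where
  "locally_lipschitz f \<longleftrightarrow> (\<forall>a b. \<exists>L. L-lipschitz_on {a..b} f)"

lemma lipschitz_on_mult:
  fixes f g :: "'a::metric_space \<Rightarrow> real"
  assumes f: "C-lipschitz_on S f" and g: "D-lipschitz_on S g"
    and A: "0 \<le> A" "\<And>x. x \<in> S \<Longrightarrow> \<bar>f x\<bar> \<le> A"
    and B: "0 \<le> B" "\<And>x. x \<in> S \<Longrightarrow> \<bar>g x\<bar> \<le> B"
  shows "(A * D + B * C)-lipschitz_on S (\<lambda>x. f x * g x)"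
proof (rule lipschitz_onI)
  fix x y assume xy: "x \<in> S" "y \<in> S"
  have "f x * g x - f y * g y = f x * (g x - g y) + g y * (f x - f y)"
    by (simp add: algebra_simps)
  then have "dist (f x * g x) (f y * g y) \<le> \<bar>f x\<bar> * dist (g x) (g y) + \<bar>g y\<bar> * dist (f x) (f y)"
    by (metis abs_mult abs_triangle_ineq dist_real_def)
  also have "\<dots> \<le> A * (D * dist x y) + B * (C * dist x y)"
    using xy A B lipschitz_onD[OF f xy] lipschitz_onD[OF g xy] by (intro add_mono mult_mono) auto
  finally show "dist (f x * g x) (f y * g y) \<le> (A * D + B * C) * dist x y"
    by (simp add: algebra_simps)
next
  show "0 \<le> A * D + B * C"
    using A B lipschitz_on_nonneg[OF f] lipschitz_on_nonneg[OF g] by simp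
qed

lemma lipschitz_on_inverse:
  fixes f :: "'a::metric_space \<Rightarrow> real"
  assumes f: "C-lipschitz_on S f" and c: "0 < c" "\<And>x. x \<in> S \<Longrightarrow> c \<le> \<bar>f x\<bar>"
  shows "(C / c\<^sup>2)-lipschitz_on S (\<lambda>x. inverse (f x))"
proof (rule lipschitz_onI)
  fix x y assume xy: "x \<in> S" "y \<in> S"
  have fc: "c \<le> \<bar>f x\<bar>" "c \<le> \<bar>f y\<bar>" using c xy by auto
  then have "f x \<noteq> 0" "f y \<noteq> 0" using c by auto
  then have "inverse (f x) - inverse (f y) = (f y - f x) / (f x * f y)"
    by (simp add: field_simps)
  then have "dist (inverse (f x)) (inverse (f y)) = dist (f x) (f y) / (\<bar>f x\<bar> * \<bar>f y\<bar>)"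
    by (simp add: dist_real_def abs_mult abs_minus_commute)
  also have "\<dots> \<le> (C * dist x y) / (c * c)"
    using lipschitz_onD[OF f xy] lipschitz_on_nonneg[OF f] fc c by (intro frac_le mult_mono) auto
  finally show "dist (inverse (f x)) (inverse (f y)) \<le> C / c\<^sup>2 * dist x y"
    by (simp add: power2_eq_square)
next
  show "0 \<le> C / c\<^sup>2" using lipschitz_on_nonneg[OF f] by simp
qed

lemma lipschitz_on_arctan: "1-lipschitz_on S arctan"
proof (rule lipschitz_on_leI)
  fix a b :: real assume "a \<le> b"
  show "dist (arctan a) (arctan b) \<le> 1 * dist a b"
  proof (cases "a = b")
    case False
    with \<open>a \<le> b\<close> have "a < b" by simp
    then obtain z where "arctan b - arctan a = (b - a) * inverse (1 + z\<^sup>2)"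
      using MVT2[of a b arctan "\<lambda>z. inverse (1 + z\<^sup>2)"] by (auto intro: DERIV_arctan)
    moreover have "inverse (1 + z\<^sup>2) \<le> 1" by (simp add: inverse_le_1_iff add_pos_nonneg)
    moreover have "arctan a \<le> arctan b" using \<open>a \<le> b\<close> by (simp add: arctan_le_iff)
    ultimately show ?thesis
      using \<open>a < b\<close> mult_left_mono[of "inverse (1 + z\<^sup>2)" 1 "b - a"] by (simp add: dist_real_def)
  qed simp
qed simp

lemma lipschitz_on_compact_bounded:
  fixes f :: "'a::metric_space \<Rightarrow> real"
  assumes "L-lipschitz_on S f" "compact S"
  obtains A where "0 \<le> A" "\<And>x. x \<in> S \<Longrightarrow> \<bar>f x\<bar> \<le> A"
proof -
  have "bounded (f ` S)"
    using assms by (intro compact_imp_bounded compact_continuous_image lipschitz_on_continuous_on)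
  then obtain A where "A > 0" "\<And>x. x \<in> S \<Longrightarrow> \<bar>f x\<bar> \<le> A"
    unfolding bounded_pos by auto
  then show thesis using that[of A] by simp
qed

lemma lipschitz_on_divide_compact:
  fixes P Q :: "'a::metric_space \<Rightarrow> real"
  assumes P: "C-lipschitz_on S P" and Q: "D-lipschitz_on S Q"
    and S: "compact S" and nz: "\<And>x. x \<in> S \<Longrightarrow> Q x \<noteq> 0"
  obtains L where "L-lipschitz_on S (\<lambda>x. P x / Q x)"
proof (cases "S = {}")
  case True
  then show thesis using that[of 0] by simp
next
  case False
  have "continuous_on S (\<lambda>x. \<bar>Q x\<bar>)"
    using lipschitz_on_continuous_on[OF Q] by (intro continuous_intros)
  then obtain x1 where "x1 \<in> S" "\<And>x. x \<in> S \<Longrightarrow> \<bar>Q x1\<bar> \<le> \<bar>Q x\<bar>"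
    using continuous_attains_inf[OF S False] by blast
  then have "(D / \<bar>Q x1\<bar>\<^sup>2)-lipschitz_on S (\<lambda>x. inverse (Q x))"
    using nz by (intro lipschitz_on_inverse[OF Q]) auto
  moreover obtain A where "0 \<le> A" "\<And>x. x \<in> S \<Longrightarrow> \<bar>P x\<bar> \<le> A"
    using lipschitz_on_compact_bounded[OF P S] by blast
  moreover obtain B where "0 \<le> B" "\<And>x. x \<in> S \<Longrightarrow> \<bar>inverse (Q x)\<bar> \<le> B"
    using lipschitz_on_compact_bounded[OF calculation(1) S] by blast
  ultimately have "(A * (D / \<bar>Q x1\<bar>\<^sup>2) + B * C)-lipschitz_on S (\<lambda>x. P x * inverse (Q x))"
    by (intro lipschitz_on_mult[OF P])
  then show thesis using that by (simp add: divide_inverse)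
qed

lemma locally_lipschitz_const: "locally_lipschitz (\<lambda>_. c)"
  unfolding locally_lipschitz_def by (auto intro: lipschitz_on_constant)

lemma locally_lipschitz_ident: "locally_lipschitz (\<lambda>t. t)"
  unfolding locally_lipschitz_def by (auto intro: lipschitz_on_id)

lemma locally_lipschitz_add:
  "locally_lipschitz f \<Longrightarrow> locally_lipschitz g \<Longrightarrow> locally_lipschitz (\<lambda>t. f t + g t)"
  unfolding locally_lipschitz_def by (blast intro: lipschitz_on_add)

lemma locally_lipschitz_diff:
  "locally_lipschitz f \<Longrightarrow> locally_lipschitz g \<Longrightarrow> locally_lipschitz (\<lambda>t. f t - g t)"
  unfolding locally_lipschitz_def by (blast intro: lipschitz_on_diff)

lemma locally_lipschitz_mult:
  assumes "locally_lipschitz f" "locally_lipschitz g"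
  shows "locally_lipschitz (\<lambda>t. f t * g t)"
  unfolding locally_lipschitz_def
proof (intro allI)
  fix a b :: real
  obtain C D where f: "C-lipschitz_on {a..b} f" and g: "D-lipschitz_on {a..b} g"
    using assms unfolding locally_lipschitz_def by blast
  obtain A where "0 \<le> A" "\<And>x. x \<in> {a..b} \<Longrightarrow> \<bar>f x\<bar> \<le> A"
    using lipschitz_on_compact_bounded[OF f compact_Icc] by blast
  moreover obtain B where "0 \<le> B" "\<And>x. x \<in> {a..b} \<Longrightarrow> \<bar>g x\<bar> \<le> B"
    using lipschitz_on_compact_bounded[OF g compact_Icc] by blast
  ultimately show "\<exists>L. L-lipschitz_on {a..b} (\<lambda>t. f t * g t)"
    using lipschitz_on_mult[OF f g] by blast
qed

lemma locally_lipschitz_divide: "locally_lipschitz f \<Longrightarrow> locally_lipschitz (\<lambda>t. f t / c)"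
  using locally_lipschitz_mult[OF _ locally_lipschitz_const[of "inverse c"], of f]
  by (simp add: divide_inverse)

lemmas locally_lipschitz_intros = locally_lipschitz_const locally_lipschitz_ident
  locally_lipschitz_add locally_lipschitz_diff
  locally_lipschitz_mult locally_lipschitz_divide

lemma locally_lipschitz_continuous_on:
  assumes "locally_lipschitz f" shows "continuous_on UNIV f"
proof -
  have "isCont f t" for t
  proof -
    obtain L where "L-lipschitz_on {t - 1..t + 1} f"
      using assms unfolding locally_lipschitz_def by blast
    then show ?thesis
      using continuous_on_interior[OF lipschitz_on_continuous_on] by fastforce
  qed
  then show ?thesis by (simp add: continuous_at_imp_continuous_on)
qed

section \<open>Null sets and almost-everywhere arguments\<close>

lemma negligible_image_zero_derivative:
  fixes H :: "real \<Rightarrow> real"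
  assumes der: "\<And>x. x \<in> S \<Longrightarrow> (H has_real_derivative 0) (at x)"
  shows "negligible (H ` S)"
proof -
  let ?f = "\<lambda>v::real^1. vec (H (v $ 1)) :: real^1"
  have "(?f has_derivative (\<lambda>x. 0 *\<^sub>R x)) (at v within vec ` S)" if "v \<in> vec ` S" for v
  proof -
    obtain a where a: "a \<in> S" "v = vec a" using \<open>v \<in> vec ` S\<close> by auto
    have "((*) (0::real)) = (\<lambda>x. x * 0)" by auto
    then have "(H has_derivative (\<lambda>x. x * 0)) (at a within S)"
      using has_derivative_at_withinI der[OF a(1)] by (metis has_field_derivative_def)
    moreover have "((*\<^sub>R) (0::real)) = (\<lambda>x::real^1. 0)" by auto
    ultimately show ?thesis using has_derivative_vector_1 a by metis
  qed
  moreover have "matrix (\<lambda>x::real^1. 0 *\<^sub>R x) = (0::real^1^1)"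
    by (simp add: matrix_def vec_eq_iff)
  ultimately have "negligible (?f ` vec ` S)"
    by (intro baby_Sard[where f' = "\<lambda>_ x. 0 *\<^sub>R x"]) auto
  then have "negligible ((\<lambda>v::real^1. v $ 1) ` ?f ` vec ` S)"
    by (rule negligible_differentiable_image_negligible[rotated])
       (auto intro!: bounded_linear_imp_differentiable_on bounded_linear_vec_nth)
  then show ?thesis by (simp add: image_image)
qed

text \<open>Lipschitz maps send null sets to null sets, and by Sard's lemma the set where the
  derivative vanishes has a null image.\<close>

lemma negligible_image_lipschitz_on_AE_zero_derivative:
  fixes H :: "real \<Rightarrow> real"
  assumes lip: "L-lipschitz_on {a..b} H"
    and der: "AE t in lborel. t \<in> {a<..<b} \<longrightarrow> (H has_real_derivative 0) (at t)"
  shows "negligible (H ` {a..b})"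
proof -
  obtain N where N: "{t. \<not> (t \<in> {a<..<b} \<longrightarrow> (H has_real_derivative 0) (at t))} \<subseteq> N"
    "N \<in> null_sets lborel"
    using der unfolding eventually_ae_filter by auto
  have "negligible N"
    using N(2) null_sets_completionI negligible_iff_null_sets by blast
  define S1 where "S1 = {a..b} \<inter> (N \<union> {a, b})"
  have "negligible (H ` S1)"
  proof (rule negligible_locally_Lipschitz_image)
    show "negligible S1"
      unfolding S1_def using \<open>negligible N\<close> by (auto intro: negligible_subset[of "N \<union> {a, b}"])
    show "\<exists>T B. open T \<and> x \<in> T \<and> (\<forall>y \<in> S1 \<inter> T. norm (H y - H x) \<le> B * norm (y - x))"
      if "x \<in> S1" for x
    proof (intro exI[of _ UNIV] exI[of _ L] conjI ballI)
      fix y assume "y \<in> S1 \<inter> UNIV"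
      then show "norm (H y - H x) \<le> L * norm (y - x)"
        using that lipschitz_on_normD[OF lip, of y x] by (auto simp: S1_def)
    qed auto
  qed auto
  moreover have "negligible (H ` ({a<..<b} - N))"
    using N(1) by (intro negligible_image_zero_derivative) auto
  moreover have "{a..b} \<subseteq> S1 \<union> ({a<..<b} - N)"
    unfolding S1_def by auto
  then have "H ` {a..b} \<subseteq> H ` S1 \<union> H ` ({a<..<b} - N)"
    by blast
  ultimately show ?thesis
    by (meson negligible_Un negligible_subset)
qed

lemma lipschitz_on_AE_zero_derivative_eq:
  fixes H :: "real \<Rightarrow> real"
  assumes lip: "L-lipschitz_on {a..b} H" and "a \<le> b"
    and der: "AE t in lborel. t \<in> {a<..<b} \<longrightarrow> (H has_real_derivative 0) (at t)"
  shows "H a = H b"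
proof -
  have "connected (H ` {a..b})"
    using lipschitz_on_continuous_on[OF lip] by (intro connected_continuous_image) auto
  then have "{min (H a) (H b)..max (H a) (H b)} \<subseteq> H ` {a..b}"
    using connected_contains_Icc[of "H ` {a..b}" "H a" "H b"]
      connected_contains_Icc[of "H ` {a..b}" "H b" "H a"] \<open>a \<le> b\<close>
    by (auto simp: min_def max_def)
  then have "negligible {min (H a) (H b)..max (H a) (H b)}"
    using negligible_image_lipschitz_on_AE_zero_derivative[OF lip der] negligible_subset by blast
  then show ?thesis
    using negligible_interval(1)[of "min (H a) (H b)" "max (H a) (H b)"]
    by (cases "H a \<le> H b") (auto simp: min_def max_def)
qed

lemma AE_lborel_not_in_negligible:
  assumes "negligible N" shows "AE t in lborel. t \<notin> N"
proof -
  have "AE t in lebesgue. t \<notin> N"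
    using assms negligible_iff_null_sets AE_not_in by blast
  then show ?thesis using AE_completion_iff by blast
qed

lemma AE_le_imp_le_continuous:
  fixes f :: "real \<Rightarrow> real"
  assumes f: "continuous_on UNIV f" and le: "AE t in lborel. c \<le> f t"
  shows "c \<le> f t"
proof (rule ccontr)
  assume "\<not> c \<le> f t"
  obtain N where N: "{s \<in> space lborel. \<not> c \<le> f s} \<subseteq> N" "N \<in> null_sets lborel"
    using le unfolding eventually_ae_filter by blast
  have "open {s. f s < c}"
    using f by (intro open_Collect_less continuous_on_const)
  moreover have "t \<in> {s. f s < c}" using \<open>\<not> c \<le> f t\<close> by simp
  moreover have "negligible N"
    using N(2) null_sets_completionI negligible_iff_null_sets by blast
  then have "negligible {s. f s < c}"
    by (rule negligible_subset) (use N(1) in auto)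
  ultimately show False using open_not_negligible by blast
qed

section \<open>Indefinite integrals of locally bounded functions\<close>

definition locally_bounded_measurable :: "(real \<Rightarrow> real) \<Rightarrow> bool" where
  "locally_bounded_measurable f \<longleftrightarrow>
     f \<in> borel_measurable lborel \<and> (\<forall>T. \<exists>M. \<forall>t. \<bar>t\<bar> \<le> T \<longrightarrow> \<bar>f t\<bar> \<le> M)"

lemma locally_bounded_measurable_bound:
  assumes "locally_bounded_measurable f"
  obtains M where "0 \<le> M" "\<And>t. t \<in> {a..b} \<Longrightarrow> \<bar>f t\<bar> \<le> M"
proof -
  obtain M where M: "\<And>t. \<bar>t\<bar> \<le> max \<bar>a\<bar> \<bar>b\<bar> \<Longrightarrow> \<bar>f t\<bar> \<le> M"
    using assms unfolding locally_bounded_measurable_def by blast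
  have "\<bar>f t\<bar> \<le> max M 0" if "t \<in> {a..b}" for t
  proof -
    have "\<bar>t\<bar> \<le> max \<bar>a\<bar> \<bar>b\<bar>" using that by auto
    then show ?thesis using M by fastforce
  qed
  then show thesis by (intro that[of "max M 0"]) auto
qed

lemma locally_bounded_measurable_set_integrable:
  assumes "locally_bounded_measurable f" shows "set_integrable lborel {a..b} f"
proof -
  obtain M where "\<And>t. t \<in> {a..b} \<Longrightarrow> \<bar>f t\<bar> \<le> M"
    using locally_bounded_measurable_bound[OF assms] by blast
  moreover have "f \<in> borel_measurable lborel"
    using assms unfolding locally_bounded_measurable_def by blast
  ultimately show ?thesis
    unfolding set_integrable_def
    by (intro integrableI_bounded_set_indicator[where B=M]) (auto simp: emeasure_lborel_Icc_eq)
qed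

lemma locally_bounded_measurable_integrable_on:
  "locally_bounded_measurable f \<Longrightarrow> f integrable_on {a..b}"
  using locally_bounded_measurable_set_integrable set_borel_integral_eq_integral(1) by blast

lemma locally_bounded_measurable_interval_integrable:
  assumes "locally_bounded_measurable f"
  shows "interval_lebesgue_integrable lborel (ereal a) (ereal b) f"
  unfolding interval_lebesgue_integrable_def
  using set_integrable_subset[OF locally_bounded_measurable_set_integrable[OF assms, of a b], of "{a<..<b}"]
    set_integrable_subset[OF locally_bounded_measurable_set_integrable[OF assms, of b a], of "{b<..<a}"]
  by (auto simp: subset_iff)

lemma locally_bounded_measurable_continuous:
  assumes "continuous_on UNIV f" shows "locally_bounded_measurable f"
  unfolding locally_bounded_measurable_def
proof (intro conjI allI)
  show "f \<in> borel_measurable lborel"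
    using borel_measurable_continuous_onI[OF assms] by simp
  fix T :: real
  have "bounded (f ` {-T..T})"
    using assms by (intro compact_imp_bounded compact_continuous_image) (auto intro: continuous_on_subset)
  then obtain B where "\<forall>t\<in>{-T..T}. \<bar>f t\<bar> \<le> B"
    unfolding bounded_iff by auto
  then show "\<exists>M. \<forall>t. \<bar>t\<bar> \<le> T \<longrightarrow> \<bar>f t\<bar> \<le> M"
    by (intro exI[of _ B]) (auto simp: abs_le_iff)
qed

lemma locally_bounded_measurable_mult:
  assumes "locally_bounded_measurable f" "locally_bounded_measurable g"
  shows "locally_bounded_measurable (\<lambda>t. f t * g t)"
  unfolding locally_bounded_measurable_def
proof (intro conjI allI)
  show "(\<lambda>t. f t * g t) \<in> borel_measurable lborel"
    using assms unfolding locally_bounded_measurable_def by auto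
  fix T :: real
  obtain M1 M2 where "\<forall>t. \<bar>t\<bar> \<le> T \<longrightarrow> \<bar>f t\<bar> \<le> M1" "\<forall>t. \<bar>t\<bar> \<le> T \<longrightarrow> \<bar>g t\<bar> \<le> M2"
    using assms unfolding locally_bounded_measurable_def by blast
  then show "\<exists>M. \<forall>t. \<bar>t\<bar> \<le> T \<longrightarrow> \<bar>f t * g t\<bar> \<le> M"
    by (intro exI[of _ "M1 * M2"]) (simp add: abs_mult mult_mono')
qed

lemma locally_bounded_measurable_add:
  assumes "locally_bounded_measurable f" "locally_bounded_measurable g"
  shows "locally_bounded_measurable (\<lambda>t. f t + g t)"
  unfolding locally_bounded_measurable_def
proof (intro conjI allI)
  show "(\<lambda>t. f t + g t) \<in> borel_measurable lborel"
    using assms unfolding locally_bounded_measurable_def by auto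
  fix T :: real
  obtain M1 M2 where "\<forall>t. \<bar>t\<bar> \<le> T \<longrightarrow> \<bar>f t\<bar> \<le> M1" "\<forall>t. \<bar>t\<bar> \<le> T \<longrightarrow> \<bar>g t\<bar> \<le> M2"
    using assms unfolding locally_bounded_measurable_def by blast
  then show "\<exists>M. \<forall>t. \<bar>t\<bar> \<le> T \<longrightarrow> \<bar>f t + g t\<bar> \<le> M"
    by (intro exI[of _ "M1 + M2"]) (smt (verit))
qed

lemma locally_bounded_measurable_const: "locally_bounded_measurable (\<lambda>_. c)"
  by (rule locally_bounded_measurable_continuous) simp

lemma locally_bounded_measurable_uminus:
  "locally_bounded_measurable f \<Longrightarrow> locally_bounded_measurable (\<lambda>t. - f t)"
  using locally_bounded_measurable_mult[OF locally_bounded_measurable_const[of "- 1"]] by simp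

lemma locally_bounded_measurable_diff:
  "locally_bounded_measurable f \<Longrightarrow> locally_bounded_measurable g \<Longrightarrow>
     locally_bounded_measurable (\<lambda>t. f t - g t)"
  using locally_bounded_measurable_add[of f "\<lambda>t. - g t"] locally_bounded_measurable_uminus
  by simp

lemma locally_bounded_measurable_divide:
  "locally_bounded_measurable f \<Longrightarrow> locally_bounded_measurable (\<lambda>t. f t / c)"
  using locally_bounded_measurable_mult[OF _ locally_bounded_measurable_const[of "inverse c"]]
  by (simp add: divide_inverse)

lemmas locally_bounded_measurable_intros = locally_bounded_measurable_const
  locally_bounded_measurable_add locally_bounded_measurable_diff locally_bounded_measurable_uminus
  locally_bounded_measurable_mult locally_bounded_measurable_divide

definition indefinite_integral :: "(real \<Rightarrow> real) \<Rightarrow> real \<Rightarrow> real" where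
  "indefinite_integral f t = (LBINT s=0..ereal t. f s)"

lemma indefinite_integral_0 [simp]: "indefinite_integral f 0 = 0"
  unfolding indefinite_integral_def by (simp add: zero_ereal_def)

lemma indefinite_integral_diff:
  assumes "locally_bounded_measurable f" "a \<le> b"
  shows "indefinite_integral f b - indefinite_integral f a = integral {a..b} f"
proof -
  have "(LBINT s=ereal 0..ereal a. f s) + (LBINT s=ereal a..ereal b. f s) = (LBINT s=ereal 0..ereal b. f s)"
    using locally_bounded_measurable_interval_integrable[OF assms(1), of "min 0 a" "max 0 b"] assms(2)
    by (intro interval_integral_sum) (simp add: min_def max_def split: if_splits)
  moreover have "(LBINT s=ereal a..ereal b. f s) = integral {a..b} f"
    using interval_integral_eq_integral[OF assms(2) locally_bounded_measurable_set_integrable[OF assms(1)]]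
    by simp
  ultimately show ?thesis
    unfolding indefinite_integral_def by (simp add: zero_ereal_def)
qed

lemma lipschitz_on_integral:
  fixes g :: "real \<Rightarrow> real"
  assumes g: "g integrable_on {a..b}" and M: "0 \<le> M" "\<And>t. t \<in> {a..b} \<Longrightarrow> \<bar>g t\<bar> \<le> M"
  shows "M-lipschitz_on {a..b} (\<lambda>t. integral {a..t} g)"
proof (rule lipschitz_on_leI)
  fix s t assume st: "s \<in> {a..b}" "t \<in> {a..b}" "s \<le> t"
  have "integral {a..s} g + integral {s..t} g = integral {a..t} g"
    using st integrable_on_subinterval[OF g]
    by (intro Henstock_Kurzweil_Integration.integral_combine) auto
  moreover have "norm (integral {s..t} g) \<le> M * measure lborel {s..t}"
    using st M integrable_on_subinterval[OF g, of s t]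
    by (intro has_integral_bound_real[where S="{}"]) auto
  ultimately show "dist (integral {a..s} g) (integral {a..t} g) \<le> M * dist s t"
    using st by (simp add: dist_real_def)
qed (fact M)

lemma locally_lipschitz_indefinite_integral:
  assumes "locally_bounded_measurable g"
  shows "locally_lipschitz (indefinite_integral g)"
  unfolding locally_lipschitz_def
proof (intro allI)
  fix a b :: real
  obtain M where "0 \<le> M" "\<And>t. t \<in> {a..b} \<Longrightarrow> \<bar>g t\<bar> \<le> M"
    using locally_bounded_measurable_bound[OF assms] by blast
  then have "(0 + M)-lipschitz_on {a..b} (\<lambda>t. indefinite_integral g a + integral {a..t} g)"
    by (intro lipschitz_on_add lipschitz_on_constant lipschitz_on_integral
        locally_bounded_measurable_integrable_on[OF assms])
  moreover have "indefinite_integral g t = indefinite_integral g a + integral {a..t} g"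
    if "t \<in> {a..b}" for t
    using indefinite_integral_diff[OF assms, of a t] that by simp
  ultimately show "\<exists>L. L-lipschitz_on {a..b} (indefinite_integral g)"
    using lipschitz_on_transform by blast
qed

lemma integral_right_quotient_tendsto:
  fixes f :: "real \<Rightarrow> real"
  assumes "\<And>a b. f integrable_on {a..b}"
  obtains N where "negligible N"
    "\<And>t. t \<notin> N \<Longrightarrow> ((\<lambda>h. integral {t..t + h} f / h) \<longlongrightarrow> f t) (at_right 0)"
proof -
  obtain N where N: "negligible N"
    "\<And>x e. x \<notin> N \<Longrightarrow> 0 < e \<Longrightarrow> \<exists>d>0. \<forall>h. 0 < h \<and> h < d \<longrightarrow>
       norm (integral (cbox x (x + h *\<^sub>R One)) f /\<^sub>R h ^ DIM(real) - f x) < e"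
    using integrable_ccontinuous_explicit[of f] assms by (metis cbox_interval)
  have "((\<lambda>h. integral {t..t + h} f / h) \<longlongrightarrow> f t) (at_right 0)" if t: "t \<notin> N" for t
    unfolding tendsto_iff eventually_at_right_field
  proof (intro allI impI)
    fix e :: real assume "0 < e"
    then obtain d where "d > 0" "\<And>h. 0 < h \<Longrightarrow> h < d \<Longrightarrow> \<bar>integral {t..t + h} f / h - f t\<bar> < e"
      using N(2)[OF t] by (fastforce simp: divide_inverse mult.commute)
    then show "\<exists>b>0. \<forall>h>0. h < b \<longrightarrow> dist (integral {t..t + h} f / h) (f t) < e"
      by (auto simp: dist_real_def)
  qed
  then show thesis using that N(1) by blast
qed

text \<open>The left difference quotients of the indefinite integral are the right difference
  quotients of the reflected integrand.\<close>

lemma indefinite_integral_has_real_derivative: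
  assumes f: "locally_bounded_measurable f"
    and right: "((\<lambda>h. integral {t..t + h} f / h) \<longlongrightarrow> f t) (at_right 0)"
    and left: "((\<lambda>h. integral {- t..- t + h} (\<lambda>s. f (- s)) / h) \<longlongrightarrow> f t) (at_right 0)"
  shows "(indefinite_integral f has_real_derivative f t) (at t)"
proof -
  let ?I = "indefinite_integral f"
  have "((\<lambda>h. (?I (t + h) - ?I t) / h) \<longlongrightarrow> f t) (at_right 0)"
    using right
  proof (rule Lim_transform_eventually)
    show "\<forall>\<^sub>F h in at_right 0. integral {t..t + h} f / h = (?I (t + h) - ?I t) / h"
      using eventually_at_right_less
      by (rule eventually_mono) (simp add: indefinite_integral_diff[OF f])
  qed
  moreover have "((\<lambda>h. (?I (t + - h) - ?I t) / - h) \<longlongrightarrow> f t) (at_right 0)"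
    using left
  proof (rule Lim_transform_eventually)
    show "\<forall>\<^sub>F h in at_right 0.
            integral {- t..- t + h} (\<lambda>s. f (- s)) / h = (?I (t + - h) - ?I t) / - h"
      using eventually_at_right_less
    proof (rule eventually_mono)
      fix h :: real assume "0 < h"
      then have "?I t - ?I (t - h) = integral {t - h..t} f"
        by (simp add: indefinite_integral_diff[OF f])
      moreover have "integral {- t..- t + h} (\<lambda>s. f (- s)) = integral {t - h..t} f"
        using Henstock_Kurzweil_Integration.integral_reflect_real[of t "t - h" f] by simp
      ultimately show "integral {- t..- t + h} (\<lambda>s. f (- s)) / h = (?I (t + - h) - ?I t) / - h"
        by (simp add: field_simps)
    qed
  qed
  ultimately show ?thesis
    unfolding DERIV_def filterlim_at_split filterlim_at_left_to_right by simp
qed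

lemma AE_has_real_derivative_indefinite_integral:
  assumes f: "locally_bounded_measurable f"
  shows "AE t in lborel. (indefinite_integral f has_real_derivative f t) (at t)"
proof -
  have int: "f integrable_on {a..b}" "(\<lambda>s. f (- s)) integrable_on {a..b}" for a b
    using locally_bounded_measurable_integrable_on[OF f]
      Henstock_Kurzweil_Integration.integrable_reflect_real[of f "- a" "- b"]
    by simp_all
  obtain N1 where N1: "negligible N1"
    "\<And>t. t \<notin> N1 \<Longrightarrow> ((\<lambda>h. integral {t..t + h} f / h) \<longlongrightarrow> f t) (at_right 0)"
    using integral_right_quotient_tendsto[of f] int(1) by blast
  obtain N2 where N2: "negligible N2"
    "\<And>t. t \<notin> N2 \<Longrightarrow> ((\<lambda>h. integral {t..t + h} (\<lambda>s. f (- s)) / h) \<longlongrightarrow> f (- t)) (at_right 0)"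
    using integral_right_quotient_tendsto[of "\<lambda>s. f (- s)"] int(2) by blast
  have neg: "negligible (N1 \<union> uminus ` N2)"
    using N1(1) negligible_differentiable_image_negligible[OF _ N2(1), of uminus]
    by (auto intro!: derivative_intros simp: differentiable_on_def)
  have der: "(indefinite_integral f has_real_derivative f t) (at t)"
    if "t \<notin> N1 \<union> uminus ` N2" for t
  proof (rule indefinite_integral_has_real_derivative[OF f])
    show "((\<lambda>h. integral {t..t + h} f / h) \<longlongrightarrow> f t) (at_right 0)"
      using that N1(2) by blast
    have "- t \<notin> N2" using that by (auto simp: image_iff)
    from N2(2)[OF this]
    show "((\<lambda>h. integral {- t..- t + h} (\<lambda>s. f (- s)) / h) \<longlongrightarrow> f t) (at_right 0)"
      by simp
  qed
  show ?thesis
    using AE_lborel_not_in_negligible[OF neg] by (rule eventually_mono) (rule der)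
qed

lemma locally_lipschitz_AE_zero_derivative_const:
  assumes "locally_lipschitz H" "AE t in lborel. (H has_real_derivative 0) (at t)"
  shows "H t = H 0"
proof -
  obtain L where "L-lipschitz_on {min 0 t..max 0 t} H"
    using assms(1) unfolding locally_lipschitz_def by blast
  then have "H (min 0 t) = H (max 0 t)"
    by (rule lipschitz_on_AE_zero_derivative_eq) (use assms(2) in \<open>auto elim: eventually_mono\<close>)
  then show ?thesis by (cases "0 \<le> t") (auto simp: min_def max_def)
qed

lemma locally_lipschitz_eq_indefinite_integral:
  assumes "locally_lipschitz G" "locally_bounded_measurable g"
    and "AE t in lborel. (G has_real_derivative g t) (at t)"
  shows "G t = G 0 + indefinite_integral g t"
proof -
  let ?H = "\<lambda>s. G s - indefinite_integral g s"
  have "locally_lipschitz ?H"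
    using assms(1,2) by (intro locally_lipschitz_diff locally_lipschitz_indefinite_integral)
  moreover have "AE t in lborel. (?H has_real_derivative 0) (at t)"
    using assms(3) AE_has_real_derivative_indefinite_integral[OF assms(2)]
    by eventually_elim (use DERIV_diff in fastforce)
  ultimately have "?H t = ?H 0" by (rule locally_lipschitz_AE_zero_derivative_const)
  then show ?thesis by simp
qed

text \<open>A Lipschitz function whose a.e. derivative is continuous differs from the integral of
  that derivative by a constant, hence is differentiable everywhere.\<close>

lemma lipschitz_on_AE_continuous_derivative:
  fixes K g :: "real \<Rightarrow> real"
  assumes lip: "L-lipschitz_on {a..b} K" and g: "continuous_on {a..b} g"
    and der: "AE t in lborel. t \<in> {a<..<b} \<longrightarrow> (K has_real_derivative g t) (at t)"
    and t0: "t0 \<in> {a<..<b}"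
  shows "(K has_real_derivative g t0) (at t0)"
proof -
  define G where "G = (\<lambda>t. integral {a..t} g)"
  have G': "(G has_real_derivative g t) (at t)" if "t \<in> {a<..<b}" for t
    using integral_has_real_derivative[OF g, of t] that at_within_Icc_at[of a t b]
    by (simp add: G_def)
  have "bounded (g ` {a..b})"
    using g by (intro compact_imp_bounded compact_continuous_image) auto
  then obtain M where "0 < M" "\<And>t. t \<in> {a..b} \<Longrightarrow> \<bar>g t\<bar> \<le> M"
    unfolding bounded_pos by auto
  then have "M-lipschitz_on {a..b} G"
    unfolding G_def using g by (intro lipschitz_on_integral integrable_continuous_real) auto
  then have KG: "(L + M)-lipschitz_on {a..b} (\<lambda>t. K t - G t)"
    using lip by (intro lipschitz_on_diff)
  have "AE s in lborel. s \<in> {a<..<b} \<longrightarrow> ((\<lambda>s. K s - G s) has_real_derivative 0) (at s)"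
    using der
  proof (rule eventually_mono, intro impI)
    fix s assume "s \<in> {a<..<b} \<longrightarrow> (K has_real_derivative g s) (at s)" "s \<in> {a<..<b}"
    then show "((\<lambda>s. K s - G s) has_real_derivative 0) (at s)"
      using DERIV_diff[OF _ G'[of s]] by fastforce
  qed
  then have const: "K a - G a = K t - G t" if t: "t \<in> {a..b}" for t
    using t by (intro lipschitz_on_AE_zero_derivative_eq[OF lipschitz_on_subset[OF KG]])
      (auto elim!: eventually_mono)
  have "((\<lambda>t. K a - G a + G t) has_real_derivative g t0) (at t0)"
    using G'[OF t0] by (auto intro: derivative_eq_intros)
  then show ?thesis
    by (rule has_field_derivative_transform_within_open[of _ _ _ "{a<..<b}"])
       (use const t0 in \<open>auto simp: algebra_simps\<close>)
qed

section \<open>Differentiability of a continuous polar angle\<close>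

lemma has_real_derivative_arctan_rotated:
  fixes h1 h2 :: "real \<Rightarrow> real"
  assumes h1: "(h1 has_real_derivative d1) (at t)" and h2: "(h2 has_real_derivative d2) (at t)"
    and nz: "h1 t * c + h2 t * s \<noteq> 0" and cs: "c\<^sup>2 + s\<^sup>2 = 1"
  shows "((\<lambda>t. arctan ((h2 t * c - h1 t * s) / (h1 t * c + h2 t * s))) has_real_derivative
           (h1 t * d2 - h2 t * d1) / ((h1 t)\<^sup>2 + (h2 t)\<^sup>2)) (at t)"
proof -
  let ?P = "h2 t * c - h1 t * s" and ?Q = "h1 t * c + h2 t * s"
  let ?P' = "d2 * c - d1 * s" and ?Q' = "d1 * c + d2 * s"
  have "((\<lambda>t. h2 t * c - h1 t * s) has_real_derivative ?P') (at t)"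
    "((\<lambda>t. h1 t * c + h2 t * s) has_real_derivative ?Q') (at t)"
    by (auto intro!: derivative_eq_intros h1 h2)
  from DERIV_chain2[OF DERIV_arctan DERIV_divide[OF this nz]]
  have "((\<lambda>t. arctan ((h2 t * c - h1 t * s) / (h1 t * c + h2 t * s))) has_real_derivative
          inverse (1 + (?P / ?Q)\<^sup>2) * ((?P' * ?Q - ?P * ?Q') / (?Q * ?Q))) (at t)" .
  moreover have "?P' * ?Q - ?P * ?Q' = (h1 t * d2 - h2 t * d1) * (c\<^sup>2 + s\<^sup>2)"
    "?P\<^sup>2 + ?Q\<^sup>2 = ((h1 t)\<^sup>2 + (h2 t)\<^sup>2) * (c\<^sup>2 + s\<^sup>2)"
    by (simp_all add: algebra_simps power2_eq_square)
  moreover have "inverse (1 + (?P / ?Q)\<^sup>2) * (X / (?Q * ?Q)) = X / (?P\<^sup>2 + ?Q\<^sup>2)" for X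
  proof -
    have "?P\<^sup>2 + ?Q\<^sup>2 > 0" using nz by (simp add: add_nonneg_pos)
    moreover have "1 + (?P / ?Q)\<^sup>2 = (?P\<^sup>2 + ?Q\<^sup>2) / ?Q\<^sup>2"
      using nz by (simp add: power_divide field_simps)
    ultimately show ?thesis using nz by (simp add: power2_eq_square)
  qed
  ultimately show ?thesis using cs by simp
qed

lemma arctan_rotated_polar:
  assumes "\<rho> \<noteq> 0" "- (pi / 2) < \<alpha> - \<beta>" "\<alpha> - \<beta> < pi / 2"
  shows "arctan ((\<rho> * sin \<alpha> * cos \<beta> - \<rho> * cos \<alpha> * sin \<beta>) /
                 (\<rho> * cos \<alpha> * cos \<beta> + \<rho> * sin \<alpha> * sin \<beta>)) = \<alpha> - \<beta>"
proof -
  have "\<rho> * sin \<alpha> * cos \<beta> - \<rho> * cos \<alpha> * sin \<beta> = \<rho> * sin (\<alpha> - \<beta>)"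
    "\<rho> * cos \<alpha> * cos \<beta> + \<rho> * sin \<alpha> * sin \<beta> = \<rho> * cos (\<alpha> - \<beta>)"
    by (simp_all add: sin_diff cos_diff algebra_simps)
  then have "(\<rho> * sin \<alpha> * cos \<beta> - \<rho> * cos \<alpha> * sin \<beta>) /
      (\<rho> * cos \<alpha> * cos \<beta> + \<rho> * sin \<alpha> * sin \<beta>) = tan (\<alpha> - \<beta>)"
    using assms(1) by (simp add: tan_def)
  then show ?thesis using assms(2,3) by (simp add: arctan_tan)
qed

lemma continuous_polar_angle_local_arctan:
  fixes h1 h2 \<rho> \<theta> :: "real \<Rightarrow> real"
  assumes \<theta>: "continuous_on UNIV \<theta>"
    and polar: "\<And>t. h1 t = \<rho> t * cos (\<theta> t)" "\<And>t. h2 t = \<rho> t * sin (\<theta> t)" "\<And>t. \<rho> t \<noteq> 0"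
  obtains a b where "t0 \<in> {a<..<b}"
    "\<And>t. t \<in> {a..b} \<Longrightarrow> h1 t * cos (\<theta> t0) + h2 t * sin (\<theta> t0) \<noteq> 0"
    "\<And>t. t \<in> {a..b} \<Longrightarrow> arctan ((h2 t * cos (\<theta> t0) - h1 t * sin (\<theta> t0)) /
                                  (h1 t * cos (\<theta> t0) + h2 t * sin (\<theta> t0))) = \<theta> t - \<theta> t0"
proof -
  obtain d where d: "d > 0" "\<And>t. dist t t0 < d \<Longrightarrow> dist (\<theta> t) (\<theta> t0) < pi / 2"
    using \<theta> unfolding continuous_on_iff by (metis UNIV_I pi_gt_zero half_gt_zero)
  have near: "- (pi / 2) < \<theta> t - \<theta> t0" "\<theta> t - \<theta> t0 < pi / 2"
    if "t \<in> {t0 - d / 2..t0 + d / 2}" for t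
  proof -
    have "\<bar>\<theta> t - \<theta> t0\<bar> < pi / 2"
      using d(2)[of t] d(1) that by (auto simp: dist_real_def)
    then show "- (pi / 2) < \<theta> t - \<theta> t0" "\<theta> t - \<theta> t0 < pi / 2"
      by (auto simp only: abs_less_iff minus_less_iff)
  qed
  show thesis
  proof (rule that[of "t0 - d / 2" "t0 + d / 2"])
    show "t0 \<in> {t0 - d / 2<..<t0 + d / 2}" using d(1) by simp
    fix t assume t: "t \<in> {t0 - d / 2..t0 + d / 2}"
    have "h1 t * cos (\<theta> t0) + h2 t * sin (\<theta> t0) = \<rho> t * cos (\<theta> t - \<theta> t0)"
      unfolding polar cos_diff by (simp add: algebra_simps)
    then show "h1 t * cos (\<theta> t0) + h2 t * sin (\<theta> t0) \<noteq> 0"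
      using cos_gt_zero_pi[OF near[OF t]] polar(3)[of t] by simp
    show "arctan ((h2 t * cos (\<theta> t0) - h1 t * sin (\<theta> t0)) /
            (h1 t * cos (\<theta> t0) + h2 t * sin (\<theta> t0))) = \<theta> t - \<theta> t0"
      using arctan_rotated_polar[OF polar(3) near[OF t]] by (simp add: polar algebra_simps)
  qed
qed

text \<open>Near \<open>t\<^sub>0\<close>, \<open>\<theta> - \<theta> t\<^sub>0\<close> is the arctangent of the quotient of the components of
  \<open>(h\<^sub>1, h\<^sub>2)\<close> rotated by \<open>-\<theta> t\<^sub>0\<close>, a Lipschitz function whose a.e. derivative is the
  continuous angular velocity \<open>w / (h\<^sub>1\<^sup>2 + h\<^sub>2\<^sup>2)\<close>.\<close>

lemma continuous_polar_angle_has_real_derivative: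
  fixes h1 h2 h1' h2' w \<rho> \<theta> :: "real \<Rightarrow> real"
  assumes lip: "locally_lipschitz h1" "locally_lipschitz h2"
    and w: "continuous_on UNIV (\<lambda>t. w t / ((h1 t)\<^sup>2 + (h2 t)\<^sup>2))"
    and der: "AE t in lborel. (h1 has_real_derivative h1' t) (at t) \<and> (h2 has_real_derivative h2' t) (at t)
                 \<and> h1 t * h2' t - h2 t * h1' t = w t"
    and \<theta>: "continuous_on UNIV \<theta>"
    and polar: "\<And>t. h1 t = \<rho> t * cos (\<theta> t)" "\<And>t. h2 t = \<rho> t * sin (\<theta> t)" "\<And>t. \<rho> t \<noteq> 0"
  shows "(\<theta> has_real_derivative w t0 / ((h1 t0)\<^sup>2 + (h2 t0)\<^sup>2)) (at t0)"
proof -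
  define c where "c = cos (\<theta> t0)"
  define s where "s = sin (\<theta> t0)"
  define P where "P = (\<lambda>t. h2 t * c - h1 t * s)"
  define Q where "Q = (\<lambda>t. h1 t * c + h2 t * s)"
  define K where "K = (\<lambda>t. arctan (P t / Q t))"
  obtain a b where t0: "t0 \<in> {a<..<b}" and Q_nz: "\<And>t. t \<in> {a..b} \<Longrightarrow> Q t \<noteq> 0"
    and K_eq: "\<And>t. t \<in> {a..b} \<Longrightarrow> K t = \<theta> t - \<theta> t0"
    using continuous_polar_angle_local_arctan[OF \<theta> polar, of t0]
    unfolding K_def P_def Q_def c_def s_def by blast
  have "locally_lipschitz P" "locally_lipschitz Q"
    unfolding P_def Q_def using lip by (auto intro!: locally_lipschitz_intros)
  then obtain LP LQ where "LP-lipschitz_on {a..b} P" "LQ-lipschitz_on {a..b} Q"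
    unfolding locally_lipschitz_def by blast
  then obtain L where "L-lipschitz_on {a..b} (\<lambda>t. P t / Q t)"
    using lipschitz_on_divide_compact Q_nz by blast
  then have K_lip: "(1 * L)-lipschitz_on {a..b} K"
    unfolding K_def using lipschitz_on_arctan by (rule lipschitz_on_compose2)
  have cs: "c\<^sup>2 + s\<^sup>2 = 1" by (simp add: c_def s_def)
  have "AE t in lborel. t \<in> {a<..<b} \<longrightarrow>
          (K has_real_derivative w t / ((h1 t)\<^sup>2 + (h2 t)\<^sup>2)) (at t)"
    using der
  proof (rule eventually_mono, intro impI)
    fix t assume "t \<in> {a<..<b}"
      and "(h1 has_real_derivative h1' t) (at t) \<and> (h2 has_real_derivative h2' t) (at t)
             \<and> h1 t * h2' t - h2 t * h1' t = w t"
    then show "(K has_real_derivative w t / ((h1 t)\<^sup>2 + (h2 t)\<^sup>2)) (at t)"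
      using has_real_derivative_arctan_rotated[of h1 "h1' t" t h2 "h2' t" c s] Q_nz[of t] cs
      by (simp add: K_def P_def Q_def)
  qed
  then have "(K has_real_derivative w t0 / ((h1 t0)\<^sup>2 + (h2 t0)\<^sup>2)) (at t0)"
    using lipschitz_on_AE_continuous_derivative[OF K_lip continuous_on_subset[OF w] _ t0] by simp
  then have "((\<lambda>t. \<theta> t0 + K t) has_real_derivative w t0 / ((h1 t0)\<^sup>2 + (h2 t0)\<^sup>2)) (at t0)"
    by (auto intro: derivative_eq_intros)
  then show ?thesis
    by (rule has_field_derivative_transform_within_open[of _ _ _ "{a<..<b}"])
       (use t0 K_eq in auto)
qed

lemma is_norm2_convex:
  assumes "is_norm2 F" shows "convex_on UNIV F"
proof
  fix t :: real and p q :: "real \<times> real" assume t: "0 < t" "t < 1"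
  have hom: "F (c *\<^sub>R p) = \<bar>c\<bar> * F p" for c p
    using assms unfolding is_norm2_def by (cases p) simp
  have "F ((1 - t) *\<^sub>R p + t *\<^sub>R q) \<le> F ((1 - t) *\<^sub>R p) + F (t *\<^sub>R q)"
    using assms unfolding is_norm2_def by (cases "(1 - t) *\<^sub>R p", cases "t *\<^sub>R q") simp
  then show "F ((1 - t) *\<^sub>R p + t *\<^sub>R q) \<le> (1 - t) * F p + t * F q"
    using t by (simp add: hom)
qed simp

lemma bounded_ballU:
  assumes F: "is_norm2 F" shows "bounded (ballU F)"
proof -
  have hom: "F (c *\<^sub>R p) = \<bar>c\<bar> * F p" for c p
    using F unfolding is_norm2_def by (cases p) simp
  have pos: "F p > 0" if "p \<noteq> 0" for p
    using F that unfolding is_norm2_def by (cases p) (metis order_le_less prod.inject zero_prod_def)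
  have "continuous_on UNIV F"
    using convex_on_continuous[OF open_UNIV is_norm2_convex[OF F]] .
  then obtain p0 where p0: "p0 \<in> sphere 0 1" "\<And>p. p \<in> sphere 0 1 \<Longrightarrow> F p0 \<le> F p"
    using continuous_attains_inf[of "sphere (0::real \<times> real) 1" F] continuous_on_subset by force
  then have "p0 \<noteq> 0" by auto
  then have "F p0 > 0" by (rule pos)
  have "norm p \<le> 1 / F p0" if "F p \<le> 1" for p
  proof (cases "p = 0")
    case False
    have "F p0 \<le> F (inverse (norm p) *\<^sub>R p)"
      using False by (intro p0(2)) simp
    also have "\<dots> = F p / norm p" by (simp add: hom divide_inverse mult.commute)
    finally have "norm p * F p0 \<le> 1"
      using False that by (simp add: field_simps)
    then show ?thesis using \<open>F p0 > 0\<close> by (simp add: field_simps)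
  qed (use \<open>F p0 > 0\<close> in simp)
  then show ?thesis
    unfolding bounded_iff ballU_def by blast
qed

section \<open>Normal extremals on the Engel group\<close>

locale engel_normal_extremal =
  fixes F :: "real \<times> real \<Rightarrow> real"
    and x y z v u1 u2 \<psi>1 \<psi>2 \<psi>3 \<psi>4 :: "real \<Rightarrow> real"
    and \<phi>1 \<phi>2 \<phi>3 \<phi>4 :: real
  assumes norm: "is_norm2 F"
    and extremal: "normal_extremal F x y z v u1 u2 \<psi>1 \<psi>2 \<psi>3 \<psi>4"
    and initial_covector: "\<phi>1 = \<psi>1 0" "\<phi>2 = \<psi>2 0" "\<phi>3 = \<psi>3 0" "\<phi>4 = \<psi>4 0"
begin

definition h1 :: "real \<Rightarrow> real" where
  "h1 t = ham1 (\<psi>1 t) (\<psi>3 t) (\<psi>4 t) (x t) (y t) (z t)"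

definition h2 :: "real \<Rightarrow> real" where
  "h2 t = ham2 (\<psi>2 t) (\<psi>3 t) (\<psi>4 t) (x t)"

lemma state_eq:
  "x = indefinite_integral u1"
  "y = indefinite_integral u2"
  "z = indefinite_integral (\<lambda>s. (x s * u2 s - y s * u1 s) / 2)"
  "v = indefinite_integral (\<lambda>s. - (z s + x s * y s / 6) * u1 s / 2 + x s ^ 2 * u2 s / 12)"
  using extremal unfolding normal_extremal_def indefinite_integral_def by (intro ext; blast)+

lemma state_0: "x 0 = 0" "y 0 = 0" "z 0 = 0" "v 0 = 0"
  by (subst state_eq; simp)+

lemma costate_eq:
  "\<psi>1 t = \<phi>1 + indefinite_integral
     (\<lambda>s. \<psi>4 s * y s * u1 s / 12 - (\<psi>3 s / 2 + \<psi>4 s * x s / 6) * u2 s) t"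
  "\<psi>2 t = \<phi>2 + indefinite_integral (\<lambda>s. (\<psi>3 s / 2 + \<psi>4 s * x s / 12) * u1 s) t"
  "\<psi>3 t = \<phi>3 + indefinite_integral (\<lambda>s. \<psi>4 s * u1 s / 2) t"
  "\<psi>4 t = \<phi>4"
  unfolding initial_covector
  using extremal unfolding normal_extremal_def indefinite_integral_def by blast+

lemma maximum_condition: "AE t in lborel. h1 t * u1 t + h2 t * u2 t = 1"
proof -
  have "AE t in lborel. h1 t * u1 t + h2 t * u2 t = F_U F (h1 t, h2 t) \<and> F_U F (h1 t, h2 t) = 1"
    using extremal unfolding normal_extremal_def h1_def h2_def by blast
  then show ?thesis by (rule eventually_mono) simp
qed

lemma controls_bounded:
  obtains K where "0 < K" "\<And>t. \<bar>u1 t\<bar> \<le> K" "\<And>t. \<bar>u2 t\<bar> \<le> K"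
proof -
  obtain K where K: "0 < K" "\<And>u. u \<in> ballU F \<Longrightarrow> norm u \<le> K"
    using bounded_ballU[OF norm] unfolding bounded_pos by blast
  have "(u1 t, u2 t) \<in> ballU F" for t
    using extremal unfolding normal_extremal_def by blast
  then have "norm (u1 t, u2 t) \<le> K" for t
    using K(2) by blast
  then have "\<bar>u1 t\<bar> \<le> K \<and> \<bar>u2 t\<bar> \<le> K" for t
    using norm_fst_le[of "u1 t" "u2 t"] norm_snd_le[of "u2 t" "u1 t"] by (metis real_norm_def order_trans)
  then show thesis using that K(1) by blast
qed

lemma controls_locally_bounded_measurable:
  "locally_bounded_measurable u1" "locally_bounded_measurable u2"
proof -
  obtain K where "0 < K" "\<And>t. \<bar>u1 t\<bar> \<le> K" "\<And>t. \<bar>u2 t\<bar> \<le> K"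
    by (rule controls_bounded) auto
  moreover have "u1 \<in> borel_measurable lborel" "u2 \<in> borel_measurable lborel"
    using extremal unfolding normal_extremal_def by blast+
  ultimately show "locally_bounded_measurable u1" "locally_bounded_measurable u2"
    unfolding locally_bounded_measurable_def by blast+
qed

lemma state_regular:
  "locally_lipschitz x" "locally_lipschitz y" "locally_lipschitz z" "locally_lipschitz v"
  "locally_bounded_measurable x" "locally_bounded_measurable y" "locally_bounded_measurable z"
proof -
  note lbm = controls_locally_bounded_measurable
  show "locally_lipschitz x"
    by (subst state_eq) (intro locally_lipschitz_indefinite_integral lbm)
  then show x': "locally_bounded_measurable x"
    by (intro locally_bounded_measurable_continuous locally_lipschitz_continuous_on)
  show "locally_lipschitz y"
    by (subst state_eq) (intro locally_lipschitz_indefinite_integral lbm)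
  then show y': "locally_bounded_measurable y"
    by (intro locally_bounded_measurable_continuous locally_lipschitz_continuous_on)
  show "locally_lipschitz z"
    by (subst state_eq) (intro locally_lipschitz_indefinite_integral
        locally_bounded_measurable_intros lbm x' y')
  then show z': "locally_bounded_measurable z"
    by (intro locally_bounded_measurable_continuous locally_lipschitz_continuous_on)
  show "locally_lipschitz v"
    by (subst state_eq, unfold power2_eq_square) (intro locally_lipschitz_indefinite_integral
        locally_bounded_measurable_intros lbm x' y' z')
qed

lemma state_derivatives:
  "AE t in lborel. (x has_real_derivative u1 t) (at t)"
  "AE t in lborel. (y has_real_derivative u2 t) (at t)"
  "AE t in lborel. (z has_real_derivative (x t * u2 t - y t * u1 t) / 2) (at t)"
  "AE t in lborel. (v has_real_derivative - (z t + x t * y t / 6) * u1 t / 2 + x t ^ 2 * u2 t / 12) (at t)"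
proof -
  note lbm = controls_locally_bounded_measurable state_regular(5-7)
  show "AE t in lborel. (x has_real_derivative u1 t) (at t)"
    using AE_has_real_derivative_indefinite_integral[OF lbm(1)] unfolding state_eq(1)[symmetric] .
  show "AE t in lborel. (y has_real_derivative u2 t) (at t)"
    using AE_has_real_derivative_indefinite_integral[OF lbm(2)] unfolding state_eq(2)[symmetric] .
  have "locally_bounded_measurable (\<lambda>s. (x s * u2 s - y s * u1 s) / 2)"
    by (intro locally_bounded_measurable_intros lbm)
  from AE_has_real_derivative_indefinite_integral[OF this]
  show "AE t in lborel. (z has_real_derivative (x t * u2 t - y t * u1 t) / 2) (at t)"
    unfolding state_eq(3)[symmetric] .
  have "locally_bounded_measurable (\<lambda>s. - (z s + x s * y s / 6) * u1 s / 2 + x s ^ 2 * u2 s / 12)"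
    unfolding power2_eq_square by (intro locally_bounded_measurable_intros lbm)
  from AE_has_real_derivative_indefinite_integral[OF this]
  show "AE t in lborel. (v has_real_derivative - (z t + x t * y t / 6) * u1 t / 2 + x t ^ 2 * u2 t / 12) (at t)"
    unfolding state_eq(4)[symmetric] .
qed

lemma costate3_formula: "\<psi>3 t = \<phi>3 + \<phi>4 * x t / 2"
proof -
  have "(\<lambda>t. \<phi>4 * x t / 2) t = (\<lambda>t. \<phi>4 * x t / 2) 0
          + indefinite_integral (\<lambda>s. \<psi>4 s * u1 s / 2) t"
  proof (rule locally_lipschitz_eq_indefinite_integral)
    show "locally_lipschitz (\<lambda>t. \<phi>4 * x t / 2)"
      by (intro locally_lipschitz_intros state_regular)
    show "locally_bounded_measurable (\<lambda>s. \<psi>4 s * u1 s / 2)"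
      by (simp add: costate_eq(4) locally_bounded_measurable_intros controls_locally_bounded_measurable)
    show "AE t in lborel. ((\<lambda>t. \<phi>4 * x t / 2) has_real_derivative \<psi>4 t * u1 t / 2) (at t)"
      using state_derivatives(1)
      by eventually_elim (auto intro!: derivative_eq_intros simp: costate_eq(4))
  qed
  then show ?thesis using costate_eq(3)[of t] state_0 by simp
qed

lemma costate2_formula: "\<psi>2 t = \<phi>2 + \<phi>3 * x t / 2 + \<phi>4 * (x t)\<^sup>2 / 6"
proof -
  have "(\<lambda>t. \<phi>3 * x t / 2 + \<phi>4 * (x t)\<^sup>2 / 6) t = (\<lambda>t. \<phi>3 * x t / 2 + \<phi>4 * (x t)\<^sup>2 / 6) 0
          + indefinite_integral (\<lambda>s. (\<psi>3 s / 2 + \<psi>4 s * x s / 12) * u1 s) t"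
  proof (rule locally_lipschitz_eq_indefinite_integral)
    show "locally_lipschitz (\<lambda>t. \<phi>3 * x t / 2 + \<phi>4 * (x t)\<^sup>2 / 6)"
      unfolding power2_eq_square by (intro locally_lipschitz_intros state_regular)
    show "locally_bounded_measurable (\<lambda>s. (\<psi>3 s / 2 + \<psi>4 s * x s / 12) * u1 s)"
      by (simp add: costate_eq(4) costate3_formula locally_bounded_measurable_intros
          controls_locally_bounded_measurable state_regular)
    show "AE t in lborel. ((\<lambda>t. \<phi>3 * x t / 2 + \<phi>4 * (x t)\<^sup>2 / 6) has_real_derivative
            (\<psi>3 t / 2 + \<psi>4 t * x t / 12) * u1 t) (at t)"
      using state_derivatives(1) by eventually_elim
        (auto intro!: derivative_eq_intros simp: costate_eq(4) costate3_formula field_simps)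
  qed
  then show ?thesis using costate_eq(2)[of t] state_0 by simp
qed

lemma costate1_formula: "\<psi>1 t = \<phi>1 - \<phi>3 * y t / 2 - \<phi>4 * (x t * y t + 3 * z t) / 6"
proof -
  have "(\<lambda>t. - \<phi>3 * y t / 2 - \<phi>4 * (x t * y t + 3 * z t) / 6) t
          = (\<lambda>t. - \<phi>3 * y t / 2 - \<phi>4 * (x t * y t + 3 * z t) / 6) 0
            + indefinite_integral (\<lambda>s. \<psi>4 s * y s * u1 s / 12 - (\<psi>3 s / 2 + \<psi>4 s * x s / 6) * u2 s) t"
  proof (rule locally_lipschitz_eq_indefinite_integral)
    show "locally_lipschitz (\<lambda>t. - \<phi>3 * y t / 2 - \<phi>4 * (x t * y t + 3 * z t) / 6)"
      by (intro locally_lipschitz_intros state_regular)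
    show "locally_bounded_measurable
            (\<lambda>s. \<psi>4 s * y s * u1 s / 12 - (\<psi>3 s / 2 + \<psi>4 s * x s / 6) * u2 s)"
      by (simp add: costate_eq(4) costate3_formula locally_bounded_measurable_intros
          controls_locally_bounded_measurable state_regular)
    show "AE t in lborel. ((\<lambda>t. - \<phi>3 * y t / 2 - \<phi>4 * (x t * y t + 3 * z t) / 6) has_real_derivative
            \<psi>4 t * y t * u1 t / 12 - (\<psi>3 t / 2 + \<psi>4 t * x t / 6) * u2 t) (at t)"
      using state_derivatives(1-3) by eventually_elim
        (auto intro!: derivative_eq_intros simp: costate_eq(4) costate3_formula field_simps)
  qed
  then show ?thesis using costate_eq(1)[of t] state_0 by simp
qed

lemma hamiltonian_eq:
  "h1 = (\<lambda>t. \<phi>1 - (\<phi>3 + \<phi>4 * x t / 2) * y t - \<phi>4 * z t)"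
  "h2 = (\<lambda>t. \<phi>2 + (\<phi>3 + \<phi>4 * x t / 2) * x t)"
  by (simp_all add: fun_eq_iff h1_def h2_def ham1_def ham2_def costate_eq(4) costate3_formula
      costate2_formula costate1_formula field_simps power2_eq_square)

lemma hamiltonian_derivatives:
  "AE t in lborel. (h1 has_real_derivative - (\<phi>3 + \<phi>4 * x t) * u2 t) (at t) \<and>
     (h2 has_real_derivative (\<phi>3 + \<phi>4 * x t) * u1 t) (at t)"
  using state_derivatives(1-3)
proof eventually_elim
  case (elim t)
  then show ?case
    unfolding hamiltonian_eq by (auto intro!: derivative_eq_intros simp: field_simps)
qed

lemma h2_first_integral: "(\<phi>3 + \<phi>4 * x t)\<^sup>2 / 2 - \<phi>4 * h2 t = \<phi>3\<^sup>2 / 2 - \<phi>2 * \<phi>4"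
  by (simp add: hamiltonian_eq field_simps power2_eq_square)

lemma time_identity: "\<phi>1 * x t + \<phi>2 * y t + (2 * \<phi>3 + \<phi>4 * x t / 2) * z t + 3 * \<phi>4 * v t = t"
proof -
  let ?G = "\<lambda>t. \<phi>1 * x t + \<phi>2 * y t + (2 * \<phi>3 + \<phi>4 * x t / 2) * z t + 3 * \<phi>4 * v t - t"
  have "locally_lipschitz ?G"
    by (intro locally_lipschitz_intros state_regular)
  moreover have "AE t in lborel. (?G has_real_derivative 0) (at t)"
    using state_derivatives maximum_condition
  proof eventually_elim
    case (elim t)
    have "(?G has_real_derivative h1 t * u1 t + h2 t * u2 t - 1) (at t)"
      by (auto intro!: derivative_eq_intros elim(1-4)
          simp: hamiltonian_eq field_simps power2_eq_square)
    then show ?case using elim(5) by simp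
  qed
  ultimately have "?G t = ?G 0" by (rule locally_lipschitz_AE_zero_derivative_const)
  then show ?thesis using state_0 by simp
qed

lemma hamiltonian_locally_lipschitz: "locally_lipschitz h1" "locally_lipschitz h2"
  unfolding hamiltonian_eq by (intro locally_lipschitz_intros state_regular)+

text \<open>The maximum condition \<open>h\<^sub>1 u\<^sub>1 + h\<^sub>2 u\<^sub>2 = 1\<close> with bounded controls keeps \<open>(h\<^sub>1, h\<^sub>2)\<close>
  away from the origin almost everywhere, hence everywhere by continuity.\<close>

lemma hamiltonian_nonzero: "(h1 t)\<^sup>2 + (h2 t)\<^sup>2 > 0"
proof -
  obtain K where K: "0 < K" "\<And>t. \<bar>u1 t\<bar> \<le> K" "\<And>t. \<bar>u2 t\<bar> \<le> K"
    by (rule controls_bounded) auto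
  have "AE t in lborel. 1 / K \<le> \<bar>h1 t\<bar> + \<bar>h2 t\<bar>"
    using maximum_condition
  proof (rule eventually_mono)
    fix t assume "h1 t * u1 t + h2 t * u2 t = 1"
    then have "1 \<le> \<bar>h1 t\<bar> * \<bar>u1 t\<bar> + \<bar>h2 t\<bar> * \<bar>u2 t\<bar>"
      using abs_triangle_ineq[of "h1 t * u1 t" "h2 t * u2 t"] by (simp add: abs_mult)
    also have "\<dots> \<le> \<bar>h1 t\<bar> * K + \<bar>h2 t\<bar> * K"
      using K by (intro add_mono mult_left_mono) auto
    finally show "1 / K \<le> \<bar>h1 t\<bar> + \<bar>h2 t\<bar>"
      using K(1) by (simp add: field_simps)
  qed
  moreover have "continuous_on UNIV (\<lambda>t. \<bar>h1 t\<bar> + \<bar>h2 t\<bar>)"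
    using hamiltonian_locally_lipschitz
    by (intro continuous_intros locally_lipschitz_continuous_on)
  ultimately have "1 / K \<le> \<bar>h1 t\<bar> + \<bar>h2 t\<bar>"
    by (intro AE_le_imp_le_continuous)
  then show ?thesis
    using K(1) by (cases "h1 t = 0 \<and> h2 t = 0") (auto simp: sum_power2_gt_zero_iff)
qed

lemma hamiltonian_angular_momentum:
  "AE t in lborel. (h1 has_real_derivative - (\<phi>3 + \<phi>4 * x t) * u2 t) (at t) \<and>
     (h2 has_real_derivative (\<phi>3 + \<phi>4 * x t) * u1 t) (at t) \<and>
     h1 t * ((\<phi>3 + \<phi>4 * x t) * u1 t) - h2 t * (- (\<phi>3 + \<phi>4 * x t) * u2 t) = \<phi>3 + \<phi>4 * x t"
  using hamiltonian_derivatives maximum_condition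
proof eventually_elim
  case (elim t)
  have "h1 t * ((\<phi>3 + \<phi>4 * x t) * u1 t) - h2 t * (- (\<phi>3 + \<phi>4 * x t) * u2 t)
          = (\<phi>3 + \<phi>4 * x t) * (h1 t * u1 t + h2 t * u2 t)"
    by (simp add: algebra_simps)
  with elim show ?case by simp
qed

lemma polar_angle_derivative:
  assumes \<theta>: "continuous_on UNIV \<theta>"
    and polar: "\<And>t. (h1 t, h2 t) = (polar_r F (\<theta> t) * cos (\<theta> t), polar_r F (\<theta> t) * sin (\<theta> t))"
  shows "(\<forall>t. \<theta> differentiable (at t)) \<and> continuous_on UNIV (deriv \<theta>) \<and>
         (\<forall>t. \<phi>3 + \<phi>4 * x t = (polar_r F (\<theta> t))\<^sup>2 * deriv \<theta> t) \<and>
         (\<forall>t. (deriv \<theta> t)\<^sup>2 =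
                (\<phi>3\<^sup>2 + 2 * \<phi>4 * (polar_r F (\<theta> t) * sin (\<theta> t) - \<phi>2)) / (polar_r F (\<theta> t))^4)"
proof -
  let ?r = "\<lambda>t. polar_r F (\<theta> t)" and ?w = "\<lambda>t. \<phi>3 + \<phi>4 * x t"
  have h: "h1 t = ?r t * cos (\<theta> t)" "h2 t = ?r t * sin (\<theta> t)" for t
    using polar[of t] by auto
  have r2: "(h1 t)\<^sup>2 + (h2 t)\<^sup>2 = (?r t)\<^sup>2" for t
    by (simp add: h power_mult_distrib flip: distrib_left)
  have r: "?r t \<noteq> 0" for t
    using hamiltonian_nonzero[of t] r2[of t] by auto
  have cont: "continuous_on UNIV (\<lambda>t. ?w t / ((h1 t)\<^sup>2 + (h2 t)\<^sup>2))"
    using hamiltonian_nonzero hamiltonian_locally_lipschitz state_regular(1)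
    by (intro continuous_intros locally_lipschitz_continuous_on) (auto simp: less_le)
  have "(\<theta> has_real_derivative ?w t / ((h1 t)\<^sup>2 + (h2 t)\<^sup>2)) (at t)" for t
    by (rule continuous_polar_angle_has_real_derivative[OF hamiltonian_locally_lipschitz cont
          hamiltonian_angular_momentum \<theta> h r])
  then have deriv: "deriv \<theta> = (\<lambda>t. ?w t / ((h1 t)\<^sup>2 + (h2 t)\<^sup>2))"
    and "\<theta> differentiable (at t)" for t
    using DERIV_imp_deriv real_differentiable_def by blast+
  moreover have "continuous_on UNIV (deriv \<theta>)"
    unfolding deriv by (rule cont)
  moreover have "?w t = (?r t)\<^sup>2 * deriv \<theta> t" for t
    using r[of t] by (simp add: deriv r2)
  moreover have "(deriv \<theta> t)\<^sup>2 = (\<phi>3\<^sup>2 + 2 * \<phi>4 * (?r t * sin (\<theta> t) - \<phi>2)) / (?r t)^4" for t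
  proof -
    have "(deriv \<theta> t)\<^sup>2 = (?w t)\<^sup>2 / ((?r t)\<^sup>2)\<^sup>2"
      by (simp add: deriv r2 power_divide)
    also have "(?w t)\<^sup>2 = \<phi>3\<^sup>2 + 2 * \<phi>4 * (?r t * sin (\<theta> t) - \<phi>2)"
      using h2_first_integral[of t] unfolding h(2)[symmetric] by (simp add: algebra_simps)
    finally show ?thesis by simp
  qed
  ultimately show ?thesis by blast
qed

end

theorem mainTheorem2:
  fixes F :: "real \<times> real \<Rightarrow> real"
    and x y z v u1 u2 \<psi>1 \<psi>2 \<psi>3 \<psi>4 :: "real \<Rightarrow> real"
    and \<phi>1 \<phi>2 \<phi>3 \<phi>4 :: real
  assumes hF: "is_norm2 F"
    and hext: "normal_extremal F x y z v u1 u2 \<psi>1 \<psi>2 \<psi>3 \<psi>4"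
    and h\<phi>: "\<phi>1 = \<psi>1 0" "\<phi>2 = \<psi>2 0" "\<phi>3 = \<psi>3 0" "\<phi>4 = \<psi>4 0"
  defines "h1 \<equiv> (\<lambda>t. ham1 (\<psi>1 t) (\<psi>3 t) (\<psi>4 t) (x t) (y t) (z t))"
    and "h2 \<equiv> (\<lambda>t. ham2 (\<psi>2 t) (\<psi>3 t) (\<psi>4 t) (x t))"
  shows
   "(\<forall>t. \<psi>4 t = \<phi>4 \<and>
         \<psi>3 t = \<phi>3 + \<phi>4 * x t / 2 \<and>
         \<psi>2 t = \<phi>2 + \<phi>3 * x t / 2 + \<phi>4 * (x t)^2 / 6 \<and>
         \<psi>1 t = \<phi>1 - \<phi>3 * y t / 2 - \<phi>4 * (x t * y t + 3 * z t) / 6 \<and>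
         h1 t = \<phi>1 - (\<phi>3 + \<phi>4 * x t / 2) * y t - \<phi>4 * z t \<and>
         h2 t = \<phi>2 + (\<phi>3 + \<phi>4 * x t / 2) * x t)
    \<and> (AE t in lborel.
         (h1 has_real_derivative (- (\<phi>3 + \<phi>4 * x t) * u2 t)) (at t) \<and>
         (h2 has_real_derivative ((\<phi>3 + \<phi>4 * x t) * u1 t)) (at t))
    \<and> (\<forall>t. (\<phi>3 + \<phi>4 * x t)^2 / 2 - \<phi>4 * h2 t = \<phi>3^2 / 2 - \<phi>2 * \<phi>4)
    \<and> (\<forall>t. \<phi>1 * x t + \<phi>2 * y t + (2 * \<phi>3 + \<phi>4 * x t / 2) * z t + 3 * \<phi>4 * v t = t)
    \<and> (\<forall>\<theta> :: real \<Rightarrow> real.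
         continuous_on UNIV \<theta> \<and>
         (\<forall>t. (h1 t, h2 t) = (polar_r F (\<theta> t) * cos (\<theta> t), polar_r F (\<theta> t) * sin (\<theta> t)))
         \<longrightarrow>
         (\<forall>t. \<theta> differentiable (at t)) \<and> continuous_on UNIV (deriv \<theta>) \<and>
         (\<forall>t. \<phi>3 + \<phi>4 * x t = (polar_r F (\<theta> t))^2 * deriv \<theta> t) \<and>
         (\<forall>t. (deriv \<theta> t)^2 =
                (\<phi>3^2 + 2 * \<phi>4 * (polar_r F (\<theta> t) * sin (\<theta> t) - \<phi>2)) / (polar_r F (\<theta> t))^4))"
proof -
  interpret E: engel_normal_extremal F x y z v u1 u2 \<psi>1 \<psi>2 \<psi>3 \<psi>4 \<phi>1 \<phi>2 \<phi>3 \<phi>4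
    using hF hext h\<phi> by unfold_locales
  have "h1 = E.h1" "h2 = E.h2"
    by (simp_all add: h1_def h2_def fun_eq_iff E.h1_def E.h2_def)
  then show ?thesis
    using E.costate_eq(4) E.costate3_formula E.costate2_formula E.costate1_formula
      E.hamiltonian_eq[unfolded fun_eq_iff] E.hamiltonian_derivatives E.h2_first_integral
      E.time_identity E.polar_angle_derivative
    by (simp only: all_conj_distrib) blast
qed

end
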